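(* Consider the network $\Sigma$ and nonempty closed sets $\mathcal{A}_i\subset\mathbb{R}^{n_i}$, $i\in\mathbb{N}$. Assume there are $\kappa_1,\kappa_2\in\mathcal{K}_\infty$ such that one of the following two conditions holds for all $i\in\mathbb{N}$, all $\xi_i\in\mathbb{R}^{n_i}$, $\bar\xi_i\in X(I_i)$ and $\mu_i\in\mathbb{R}^{p_i}$: (a) $|f_i(\xi_i,\bar\xi_i,\mu_i)|_{\mathcal{A}_i}\le\kappa_1(|\xi_i|_{\mathcal{A}_i})+\kappa_2(|\bar\xi_i|)+\kappa_2(|\mu_i|)$; (b) $|f_i(\xi_i,\bar\xi_i,\mu_i)|_{\mathcal{A}_i}\le\kappa_1(|\xi_i|_{\mathcal{A}_i})+\kappa_2(|\bar\xi_i|_{\mathcal{A}(I_i)})+\kappa_2(|\mu_i|)$. Assume further that $(\mathcal{A}_i)_{i\in\mathbb{N}}$ is uniformly bounded, i.e. there is $C>0$ with $|z|\le C$ for all $i\in\mathbb{N}$ and all $z\in\mathcal{A}_i$. Then $\Sigma$ is well-posed.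
   Context: For each $i\in\mathbb{N}$ fix positive integers $n_i,p_i$, norms $|\cdot|$ on $\mathbb{R}^{n_i}$, $\mathbb{R}^{p_i}$, and a finite set $I_i\subset\mathbb{N}\setminus\{i\}$ such that every set $\{j\in\mathbb{N}:i\in I_j\}$ is finite. $X(I_i):=\prod_{j\in I_i}\mathbb{R}^{n_j}$ with norm $|\bar x_i|:=\sup_{j\in I_i}|x_j|$. Each $f_i:\mathbb{R}^{n_i}\times X(I_i)\times\mathbb{R}^{p_i}\to\mathbb{R}^{n_i}$ is continuous. $X$ (resp. $U$) is the space of sequences $(x_i)_{i\in\mathbb{N}}$, $x_i\in\mathbb{R}^{n_i}$ (resp. $(u_i)$, $u_i\in\mathbb{R}^{p_i}$), with $\sup_i|x_i|<\infty$, normed by $|x|_\infty=\sup_i|x_i|$. $f:\prod_i\mathbb{R}^{n_i}\times U\to\prod_i\mathbb{R}^{n_i}$ is $f(x,u)_i=f_i(x_i,(x_j)_{j\in I_i},u_i)$; the network $\Sigma$ is $x^+=f(x,u)$, and it is well-posed if $f(x,u)\in X$ for all $x\in X$, $u\in U$. $|z|_{\mathcal{A}_i}:=\inf_{y\in\mathcal{A}_i}|z-y|$; $\mathcal{A}(I_i):=\prod_{j\in I_i}\mathcal{A}_j$ and $|\bar\xi_i|_{\mathcal{A}(I_i)}:=\inf_{z\in\mathcal{A}(I_i)}|\bar\xi_i-z|$ (which equals $\max_{j\in I_i}|\xi_j|_{\mathcal{A}_j}$). $\mathcal{K}_\infty$: continuous strictly increasing unbounded functions $[0,\infty)\to[0,\infty)$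 vanishing at $0$. *)

theory Defs
  imports "HOL-Analysis.Analysis"
begin

text \<open>Vectors of R^n are modelled as functions nat => real vanishing from index n on.
  Topology on nat => real is the product topology, which on these finite-dimensional
  subspaces coincides with the norm topology of any norm.\<close>

definition vspace :: "nat \<Rightarrow> (nat \<Rightarrow> real) set" where
  "vspace n = {v. \<forall>j\<ge>n. v j = 0}"

definition is_norm_on :: "nat \<Rightarrow> ((nat \<Rightarrow> real) \<Rightarrow> real) \<Rightarrow> bool" where
  "is_norm_on n N \<longleftrightarrow>
     (\<forall>v\<in>vspace n. N v \<ge> 0 \<and> (N v = 0 \<longleftrightarrow> v = (\<lambda>j. 0))) \<and>
     (\<forall>c. \<forall>v\<in>vspace n. N (\<lambda>j. c * v j) = \<bar>c\<bar> * N v) \<and>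
     (\<forall>v\<in>vspace n. \<forall>w\<in>vspace n. N (\<lambda>j. v j + w j) \<le> N v + N w)"

definition class_Kinf :: "(real \<Rightarrow> real) \<Rightarrow> bool" where
  "class_Kinf k \<longleftrightarrow> continuous_on {0..} k \<and> k 0 = 0 \<and> strict_mono_on {0..} k \<and>
     (\<forall>M. \<exists>r\<ge>0. k r > M)"

definition Xbar :: "(nat \<Rightarrow> nat) \<Rightarrow> nat set \<Rightarrow> (nat \<Rightarrow> nat \<Rightarrow> real) set" where
  "Xbar n I = {b. \<forall>j. (j \<in> I \<longrightarrow> b j \<in> vspace (n j)) \<and> (j \<notin> I \<longrightarrow> b j = (\<lambda>k. 0))}"

definition supnorm :: "(nat \<Rightarrow> (nat \<Rightarrow> real) \<Rightarrow> real) \<Rightarrow> nat set \<Rightarrow> (nat \<Rightarrow> nat \<Rightarrow> real) \<Rightarrow> real" where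
  "supnorm N I b = Max (insert 0 ((\<lambda>j. N j (b j)) ` I))"

definition distN :: "((nat \<Rightarrow> real) \<Rightarrow> real) \<Rightarrow> (nat \<Rightarrow> real) set \<Rightarrow> (nat \<Rightarrow> real) \<Rightarrow> real" where
  "distN N A z = Inf ((\<lambda>y. N (\<lambda>j. z j - y j)) ` A)"

definition prodA :: "(nat \<Rightarrow> (nat \<Rightarrow> real) set) \<Rightarrow> nat set \<Rightarrow> (nat \<Rightarrow> nat \<Rightarrow> real) set" where
  "prodA A I = {z. \<forall>j. (j \<in> I \<longrightarrow> z j \<in> A j) \<and> (j \<notin> I \<longrightarrow> z j = (\<lambda>k. 0))}"

definition distProd :: "(nat \<Rightarrow> (nat \<Rightarrow> real) \<Rightarrow> real) \<Rightarrow> (nat \<Rightarrow> (nat \<Rightarrow> real) set) \<Rightarrow> nat set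
    \<Rightarrow> (nat \<Rightarrow> nat \<Rightarrow> real) \<Rightarrow> real" where
  "distProd N A I b = Inf ((\<lambda>z. supnorm N I (\<lambda>j k. b j k - z j k)) ` prodA A I)"

definition seqspace :: "(nat \<Rightarrow> nat) \<Rightarrow> (nat \<Rightarrow> (nat \<Rightarrow> real) \<Rightarrow> real) \<Rightarrow> (nat \<Rightarrow> nat \<Rightarrow> real) set" where
  "seqspace n N = {x. (\<forall>i. x i \<in> vspace (n i)) \<and> (\<exists>M. \<forall>i. N i (x i) \<le> M)}"

definition netmap :: "(nat \<Rightarrow> (nat \<Rightarrow> real) \<Rightarrow> (nat \<Rightarrow> nat \<Rightarrow> real) \<Rightarrow> (nat \<Rightarrow> real) \<Rightarrow> (nat \<Rightarrow> real))
    \<Rightarrow> (nat \<Rightarrow> nat set) \<Rightarrow> (nat \<Rightarrow> nat \<Rightarrow> real) \<Rightarrow> (nat \<Rightarrow> nat \<Rightarrow> real) \<Rightarrow> (nat \<Rightarrow> nat \<Rightarrow> real)" where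
  "netmap f I x u = (\<lambda>i. f i (x i) (\<lambda>j. if j \<in> I i then x j else (\<lambda>k. 0)) (u i))"

definition well_posed where
  "well_posed n p Nx Nu I f \<longleftrightarrow>
     (\<forall>x\<in>seqspace n Nx. \<forall>u\<in>seqspace p Nu. netmap f I x u \<in> seqspace n Nx)"

end

theory Submission
  imports Defs
begin

text \<open>Since every \<open>\<A>\<^sub>i\<close> lies in the ball of radius \<open>C\<close>, the norm \<open>|z|\<close> and the
  distance \<open>|z|\<^bsub>\<A>\<^sub>i\<^esub>\<close> differ by at most \<open>C\<close>. For bounded \<open>x\<close> and \<open>u\<close> the arguments of
  \<open>\<kappa>\<^sub>1\<close> and \<open>\<kappa>\<^sub>2\<close> in (a) or (b) are therefore bounded uniformly in \<open>i\<close>, hence so are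
  \<open>|f\<^sub>i(x\<^sub>i, x\<^sub>I\<^sub>i, u\<^sub>i)|\<^bsub>\<A>\<^sub>i\<^esub>\<close> and \<open>|f\<^sub>i(x\<^sub>i, x\<^sub>I\<^sub>i, u\<^sub>i)|\<close>.\<close>

lemma vspace_diff: "v \<in> vspace n \<Longrightarrow> w \<in> vspace n \<Longrightarrow> (\<lambda>j. v j - w j) \<in> vspace n"
  by (simp add: vspace_def)

lemma is_norm_on_nonneg: "is_norm_on n N \<Longrightarrow> v \<in> vspace n \<Longrightarrow> 0 \<le> N v"
  by (simp add: is_norm_on_def)

lemma is_norm_on_minus:
  assumes "is_norm_on n N" "v \<in> vspace n"
  shows "N (\<lambda>j. - v j) = N v"
proof -
  have "N (\<lambda>j. (-1) * v j) = \<bar>-1\<bar> * N v"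
    using assms unfolding is_norm_on_def by blast
  then show ?thesis by simp
qed

lemma is_norm_on_triangle:
  "is_norm_on n N \<Longrightarrow> v \<in> vspace n \<Longrightarrow> w \<in> vspace n \<Longrightarrow> N (\<lambda>j. v j + w j) \<le> N v + N w"
  by (simp add: is_norm_on_def)

lemma is_norm_on_diff_le:
  assumes N: "is_norm_on n N" and v: "v \<in> vspace n" and w: "w \<in> vspace n"
  shows "N (\<lambda>j. v j - w j) \<le> N v + N w"
proof -
  have "(\<lambda>j. - w j) \<in> vspace n" using w by (simp add: vspace_def)
  from is_norm_on_triangle[OF N v this] show ?thesis
    using is_norm_on_minus[OF N w] by simp
qed

lemma is_norm_on_le_diff_add:
  assumes N: "is_norm_on n N" and v: "v \<in> vspace n" and w: "w \<in> vspace n"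
  shows "N v \<le> N (\<lambda>j. v j - w j) + N w"
  using is_norm_on_triangle[OF N vspace_diff[OF v w] w] by simp

lemma distN_le:
  assumes "is_norm_on n N" "A \<subseteq> vspace n" "y \<in> A" "z \<in> vspace n"
  shows "distN N A z \<le> N (\<lambda>j. z j - y j)"
  unfolding distN_def
proof (rule cInf_lower)
  show "bdd_below ((\<lambda>y. N (\<lambda>j. z j - y j)) ` A)"
    using assms is_norm_on_nonneg vspace_diff by (intro bdd_belowI[where m = 0]) blast
qed (use assms in blast)

lemma distN_nonneg:
  assumes "is_norm_on n N" "A \<subseteq> vspace n" "A \<noteq> {}" "z \<in> vspace n"
  shows "0 \<le> distN N A z"
  unfolding distN_def
  using assms is_norm_on_nonneg vspace_diff by (intro cInf_greatest) blast+

lemma distN_le_norm_add: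
  assumes N: "is_norm_on n N" and A: "A \<subseteq> vspace n" "A \<noteq> {}" and z: "z \<in> vspace n"
    and C: "\<forall>y\<in>A. N y \<le> C"
  shows "distN N A z \<le> N z + C"
proof -
  obtain y where y: "y \<in> A" using A by blast
  have "distN N A z \<le> N (\<lambda>j. z j - y j)" using distN_le[OF N A(1) y z] .
  also have "\<dots> \<le> N z + N y" using is_norm_on_diff_le[OF N z] A y by blast
  finally show ?thesis using C y by fastforce
qed

lemma norm_le_distN_add:
  assumes N: "is_norm_on n N" and A: "A \<subseteq> vspace n" "A \<noteq> {}" and z: "z \<in> vspace n"
    and C: "\<forall>y\<in>A. N y \<le> C"
  shows "N z \<le> distN N A z + C"
proof -
  have "N z - C \<le> distN N A z"
    unfolding distN_def
  proof (rule cInf_greatest)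
    fix t assume "t \<in> (\<lambda>y. N (\<lambda>j. z j - y j)) ` A"
    then obtain y where y: "y \<in> A" and t: "t = N (\<lambda>j. z j - y j)" by blast
    have "N z \<le> t + N y" unfolding t using is_norm_on_le_diff_add[OF N z] A y by blast
    then show "N z - C \<le> t" using C y by fastforce
  qed (use A in blast)
  then show ?thesis by simp
qed

lemma supnorm_nonneg: "finite I \<Longrightarrow> 0 \<le> supnorm N I b"
  unfolding supnorm_def by (rule Max_ge) auto

lemma supnorm_le: "finite I \<Longrightarrow> 0 \<le> K \<Longrightarrow> \<forall>j\<in>I. N j (b j) \<le> K \<Longrightarrow> supnorm N I b \<le> K"
  unfolding supnorm_def by (subst Max_le_iff) auto

lemma prodA_nonempty:
  assumes "\<forall>j\<in>I. A j \<noteq> {}"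
  shows "prodA A I \<noteq> {}"
proof -
  have "(\<lambda>j. if j \<in> I then SOME y. y \<in> A j else (\<lambda>k. 0)) \<in> prodA A I"
    using assms unfolding prodA_def by (simp add: some_in_eq)
  then show ?thesis by blast
qed

lemma distProd_nonneg:
  assumes "finite I" "\<forall>j\<in>I. A j \<noteq> {}"
  shows "0 \<le> distProd N A I b"
  unfolding distProd_def
  using assms prodA_nonempty supnorm_nonneg by (intro cInf_greatest) blast+

lemma distProd_le:
  assumes "finite I" "z \<in> prodA A I"
  shows "distProd N A I b \<le> supnorm N I (\<lambda>j k. b j k - z j k)"
  unfolding distProd_def
proof (rule cInf_lower)
  show "bdd_below ((\<lambda>z. supnorm N I (\<lambda>j k. b j k - z j k)) ` prodA A I)"
    using assms(1) supnorm_nonneg by (intro bdd_belowI[where m = 0]) blast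
qed (use assms in blast)

definition neighbour_states :: "nat set \<Rightarrow> (nat \<Rightarrow> nat \<Rightarrow> real) \<Rightarrow> nat \<Rightarrow> nat \<Rightarrow> real" where
  "neighbour_states J x = (\<lambda>j. if j \<in> J then x j else (\<lambda>k. 0))"

lemma netmap_eq: "netmap f I x u i = f i (x i) (neighbour_states (I i) x) (u i)"
  by (simp add: netmap_def neighbour_states_def)

lemma neighbour_states_in_Xbar: "\<forall>j. x j \<in> vspace (n j) \<Longrightarrow> neighbour_states J x \<in> Xbar n J"
  by (simp add: Xbar_def neighbour_states_def vspace_def)

lemma supnorm_neighbour_states_le:
  assumes "finite J" "0 \<le> M" "\<forall>j. N j (x j) \<le> M"
  shows "supnorm N J (neighbour_states J x) \<le> M"
  using assms by (intro supnorm_le) (auto simp: neighbour_states_def)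

lemma distProd_neighbour_states_le:
  assumes J: "finite J" and N: "\<forall>j. is_norm_on (n j) (N j)"
    and A: "\<forall>j. A j \<subseteq> vspace (n j)" "\<forall>j. A j \<noteq> {}"
    and C: "0 \<le> C" "\<forall>j. \<forall>y\<in>A j. N j y \<le> C"
    and x: "\<forall>j. x j \<in> vspace (n j)" and M: "0 \<le> M" "\<forall>j. N j (x j) \<le> M"
  shows "distProd N A J (neighbour_states J x) \<le> M + C"
proof -
  obtain z where z: "z \<in> prodA A J" using prodA_nonempty A(2) by blast
  have "distProd N A J (neighbour_states J x)
      \<le> supnorm N J (\<lambda>j k. neighbour_states J x j k - z j k)"
    using distProd_le[OF J z] .
  also have "\<dots> \<le> M + C"
  proof (rule supnorm_le[OF J])
    show "\<forall>j\<in>J. N j (\<lambda>k. neighbour_states J x j k - z j k) \<le> M + C"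
    proof
      fix j assume j: "j \<in> J"
      then have zj: "z j \<in> A j" using z unfolding prodA_def by blast
      have "N j (\<lambda>k. x j k - z j k) \<le> N j (x j) + N j (z j)"
        using is_norm_on_diff_le[OF N[rule_format] x[rule_format]] zj A(1) by blast
      also have "\<dots> \<le> M + C" using M(2) C(2) zj by (intro add_mono) auto
      finally show "N j (\<lambda>k. neighbour_states J x j k - z j k) \<le> M + C"
        using j by (simp add: neighbour_states_def)
    qed
  qed (use M C in simp)
  finally show ?thesis .
qed

lemma neighbour_states_gap_bounds:
  assumes J: "finite J" and N: "\<forall>j. is_norm_on (n j) (N j)"
    and A: "\<forall>j. A j \<subseteq> vspace (n j)" "\<forall>j. A j \<noteq> {}"
    and C: "0 \<le> C" "\<forall>j. \<forall>y\<in>A j. N j y \<le> C"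
    and x: "\<forall>j. x j \<in> vspace (n j)" and M: "0 \<le> M" "\<forall>j. N j (x j) \<le> M"
  shows "0 \<le> supnorm N J (neighbour_states J x)" "supnorm N J (neighbour_states J x) \<le> M + C"
    and "0 \<le> distProd N A J (neighbour_states J x)" "distProd N A J (neighbour_states J x) \<le> M + C"
  using supnorm_nonneg[OF J] supnorm_neighbour_states_le[where N = N and x = x, OF J M] distProd_nonneg[OF J] A(2)
    distProd_neighbour_states_le[OF assms] C(1) by auto

lemma class_Kinf_mono: "class_Kinf k \<Longrightarrow> 0 \<le> a \<Longrightarrow> a \<le> b \<Longrightarrow> k a \<le> k b"
  unfolding class_Kinf_def
  by (metis atLeast_iff order.trans order_le_less strict_mono_onD)

lemma seqspace_bound:
  assumes "x \<in> seqspace n N"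
  obtains M where "0 \<le> M" "\<forall>i. N i (x i) \<le> M"
proof -
  obtain M where "\<forall>i. N i (x i) \<le> M" using assms unfolding seqspace_def by blast
  then show thesis by (intro that[of "max M 0"]) (auto simp: le_max_iff_disj)
qed

lemma norm_le_from_gain_estimate:
  assumes N: "is_norm_on n N" and A: "A \<subseteq> vspace n" "A \<noteq> {}" "\<forall>y\<in>A. N y \<le> C"
    and k1: "class_Kinf k1" and k2: "class_Kinf k2"
    and y: "y \<in> vspace n" and \<xi>: "\<xi> \<in> vspace n" "N \<xi> \<le> M"
    and gap: "0 \<le> g" "g \<le> M + C" and \<mu>: "0 \<le> m" "m \<le> Mu"
    and gain: "distN N A y \<le> k1 (distN N A \<xi>) + k2 g + k2 m"
  shows "N y \<le> k1 (M + C) + k2 (M + C) + k2 Mu + C"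
proof -
  have "0 \<le> distN N A \<xi>" using distN_nonneg[OF N A(1,2) \<xi>(1)] .
  moreover have "distN N A \<xi> \<le> M + C"
    using distN_le_norm_add[OF N A(1,2) \<xi>(1) A(3)] \<xi>(2) by linarith
  ultimately have "k1 (distN N A \<xi>) \<le> k1 (M + C)" using class_Kinf_mono[OF k1] by blast
  moreover have "k2 g \<le> k2 (M + C)" using class_Kinf_mono[OF k2 gap] .
  moreover have "k2 m \<le> k2 Mu" using class_Kinf_mono[OF k2 \<mu>] .
  ultimately have "distN N A y \<le> k1 (M + C) + k2 (M + C) + k2 Mu" using gain by linarith
  then show ?thesis using norm_le_distN_add[OF N A(1,2) y A(3)] by linarith
qed

theorem lemma4:
  fixes n p :: "nat \<Rightarrow> nat"
    and Nx Nu :: "nat \<Rightarrow> (nat \<Rightarrow> real) \<Rightarrow> real"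
    and I :: "nat \<Rightarrow> nat set"
    and f :: "nat \<Rightarrow> (nat \<Rightarrow> real) \<Rightarrow> (nat \<Rightarrow> nat \<Rightarrow> real) \<Rightarrow> (nat \<Rightarrow> real) \<Rightarrow> (nat \<Rightarrow> real)"
    and A :: "nat \<Rightarrow> (nat \<Rightarrow> real) set"
  assumes n_pos: "\<forall>i. n i > 0" and p_pos: "\<forall>i. p i > 0"
    and Nx_norm: "\<forall>i. is_norm_on (n i) (Nx i)"
    and Nu_norm: "\<forall>i. is_norm_on (p i) (Nu i)"
    and I_fin: "\<forall>i. finite (I i)" and I_irr: "\<forall>i. i \<notin> I i"
    and I_inv_fin: "\<forall>i. finite {j. i \<in> I j}"
    and f_range: "\<forall>i. \<forall>\<xi>\<in>vspace (n i). \<forall>b\<in>Xbar n (I i). \<forall>\<mu>\<in>vspace (p i).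
                    f i \<xi> b \<mu> \<in> vspace (n i)"
    and f_cont: "\<forall>i. continuous_on (vspace (n i) \<times> Xbar n (I i) \<times> vspace (p i))
                    (\<lambda>(\<xi>, b, \<mu>). f i \<xi> b \<mu>)"
    and A_sub: "\<forall>i. A i \<subseteq> vspace (n i)"
    and A_ne: "\<forall>i. A i \<noteq> {}" and A_closed: "\<forall>i. closed (A i)"
    and kappa: "\<exists>\<kappa>1 \<kappa>2. class_Kinf \<kappa>1 \<and> class_Kinf \<kappa>2 \<and>
       ((\<forall>i. \<forall>\<xi>\<in>vspace (n i). \<forall>b\<in>Xbar n (I i). \<forall>\<mu>\<in>vspace (p i).
           distN (Nx i) (A i) (f i \<xi> b \<mu>)
             \<le> \<kappa>1 (distN (Nx i) (A i) \<xi>) + \<kappa>2 (supnorm Nx (I i) b) + \<kappa>2 (Nu i \<mu>))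
        \<or>
        (\<forall>i. \<forall>\<xi>\<in>vspace (n i). \<forall>b\<in>Xbar n (I i). \<forall>\<mu>\<in>vspace (p i).
           distN (Nx i) (A i) (f i \<xi> b \<mu>)
             \<le> \<kappa>1 (distN (Nx i) (A i) \<xi>) + \<kappa>2 (distProd Nx A (I i) b) + \<kappa>2 (Nu i \<mu>)))"
    and A_bdd: "\<exists>C>0. \<forall>i. \<forall>z\<in>A i. Nx i z \<le> C"
  shows "well_posed n p Nx Nu I f"
proof -
  obtain C where C: "0 < C" "\<forall>i. \<forall>z\<in>A i. Nx i z \<le> C" using A_bdd by blast
  obtain k1 k2 gap where k1: "class_Kinf k1" and k2: "class_Kinf k2"
    and gap: "gap = (\<lambda>i. supnorm Nx (I i)) \<or> gap = (\<lambda>i. distProd Nx A (I i))"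
    and gain: "\<forall>i. \<forall>\<xi>\<in>vspace (n i). \<forall>b\<in>Xbar n (I i). \<forall>\<mu>\<in>vspace (p i).
      distN (Nx i) (A i) (f i \<xi> b \<mu>) \<le> k1 (distN (Nx i) (A i) \<xi>) + k2 (gap i b) + k2 (Nu i \<mu>)"
    using kappa by (elim exE conjE disjE) (rule that, assumption+, simp_all)+
  show ?thesis
    unfolding well_posed_def
  proof (intro ballI)
    fix x u assume x: "x \<in> seqspace n Nx" and u: "u \<in> seqspace p Nu"
    obtain M where M: "0 \<le> M" "\<forall>i. Nx i (x i) \<le> M" using x by (rule seqspace_bound)
    obtain Mu where Mu: "\<forall>i. Nu i (u i) \<le> Mu" using u by (rule seqspace_bound)
    have xv: "\<forall>j. x j \<in> vspace (n j)" and uv: "\<And>i. u i \<in> vspace (p i)"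
      using x u by (simp_all add: seqspace_def)
    have b: "neighbour_states (I i) x \<in> Xbar n (I i)" for i
      using neighbour_states_in_Xbar xv .
    have gap_b: "0 \<le> gap i (neighbour_states (I i) x)" "gap i (neighbour_states (I i) x) \<le> M + C"
      for i
      using gap C(1) neighbour_states_gap_bounds[where N = Nx and n = n and x = x,
          OF I_fin[rule_format, of i] Nx_norm A_sub A_ne _ C(2) xv M]
      by auto
    have "Nx i (netmap f I x u i) \<le> k1 (M + C) + k2 (M + C) + k2 Mu + C" for i
      unfolding netmap_eq
      using norm_le_from_gain_estimate[OF Nx_norm[rule_format] A_sub[rule_format] A_ne[rule_format]
          C(2)[THEN spec] k1 k2 f_range[rule_format, OF xv[rule_format] b uv] xv[rule_format]
          M(2)[rule_format] gap_b is_norm_on_nonneg[OF Nu_norm[rule_format] uv] Mu[rule_format]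
          gain[rule_format, OF xv[rule_format] b uv]] .
    then show "netmap f I x u \<in> seqspace n Nx"
      using f_range xv uv b unfolding seqspace_def netmap_eq by blast
  qed
qed

end
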